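(* Let $r\geq 2$ and let $X$ be a rose with $r$ petals, with $F\cong\pi_1(X,x_0)$ the free group on the generators $\alpha_1,\ldots,\alpha_r$ corresponding to the oriented petals. Let $Z$ be a finite, non-empty, connected graph and let $Z\to X$ be an immersion that is not a covering map. Then the immersion factors as $Z\hookrightarrow Y\to X$, where $Z$ is a subgraph of $Y$, $Y$ is a finite connected graph, $Y\to X$ is a finite-sheeted (combinatorial) covering map, and the image of the resulting homomorphism $F\to\mathrm{Sym}(V(Y))$ (given by the action of $F$ on the vertex set $V(Y)$ of $Y$ by path lifting) is the full symmetric group $\mathrm{Sym}(V(Y))$.
   Context: A rose with $r$ petals is a graph with exactly one vertex $x_0$ and $r$ edges; each edge is oriented and labelled by a generator $\alpha_i$, giving $\pi_1(X,x_0)\cong F$ free on $\alpha_1,\dots,\alpha_r$. A combinatorial map of graphs $Y\to X$ (sending vertices to vertices and edges to edges) is equivalent to an orientation and labelling of the edges of $Y$ by $\alpha_1,\ldots,\alpha_r$. It is an immersion if it is injective on links of vertices, equivalently if at every vertex of $Y$ and for every label $\alpha_i$ there is at most one incoming and at most one outgoing edge labelled $\alpha_i$; it is a covering map if it is bijective on links of vertices, equivalently if at every vertex there is exactly one incoming and exactly one outgoing edge labelled $\alpha_i$ for each $i$. For a covering $Y\to X$, $F$ acts on the vertices of $Y$ by path lifting: for a vertex $y$ and $\gamma\in F$ viewed as a loop at $x_0$, $\gamma.y$ is the endpoint of the unique lift of $\gamma$ starting at $y$; concretely, $\alpha_i$ sends $u$ to $v$ when there is an edge labelled $\alpha_i$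 oriented from $u$ to $v$. *)

theory Defs
  imports Main "HOL-Algebra.Bij" "HOL-Algebra.Generated_Groups"
begin

text \<open>A graph over the rose with r petals: a graph with oriented edges, each
  labelled by a generator index in {..<r} (label i stands for alpha_(i+1)).
  Such a labelling is the same as a combinatorial map to the rose X.\<close>

record ('v, 'e) lgraph =
  verts :: "'v set"
  arcs  :: "'e set"
  tail  :: "'e \<Rightarrow> 'v"
  head  :: "'e \<Rightarrow> 'v"
  lab   :: "'e \<Rightarrow> nat"

definition wf_lgraph :: "nat \<Rightarrow> ('v, 'e) lgraph \<Rightarrow> bool" where
  "wf_lgraph r G \<longleftrightarrow>
     (\<forall>e\<in>arcs G. tail G e \<in> verts G \<and> head G e \<in> verts G \<and> lab G e < r)"

definition finite_lgraph :: "('v, 'e) lgraph \<Rightarrow> bool" where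
  "finite_lgraph G \<longleftrightarrow> finite (verts G) \<and> finite (arcs G)"

definition adj :: "('v, 'e) lgraph \<Rightarrow> ('v \<times> 'v) set" where
  "adj G = {(tail G e, head G e) | e. e \<in> arcs G} \<union> {(head G e, tail G e) | e. e \<in> arcs G}"

definition connected_lgraph :: "('v, 'e) lgraph \<Rightarrow> bool" where
  "connected_lgraph G \<longleftrightarrow> (\<forall>u\<in>verts G. \<forall>v\<in>verts G. (u, v) \<in> (adj G)\<^sup>*)"

definition immersion :: "nat \<Rightarrow> ('v, 'e) lgraph \<Rightarrow> bool" where
  "immersion r G \<longleftrightarrow> (\<forall>v\<in>verts G. \<forall>i<r.
     (\<forall>e\<in>arcs G. \<forall>e'\<in>arcs G. tail G e = v \<and> tail G e' = v \<and> lab G e = i \<and> lab G e' = i \<longrightarrow> e = e') \<and>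
     (\<forall>e\<in>arcs G. \<forall>e'\<in>arcs G. head G e = v \<and> head G e' = v \<and> lab G e = i \<and> lab G e' = i \<longrightarrow> e = e'))"

definition covering :: "nat \<Rightarrow> ('v, 'e) lgraph \<Rightarrow> bool" where
  "covering r G \<longleftrightarrow> (\<forall>v\<in>verts G. \<forall>i<r.
     (\<exists>!e. e \<in> arcs G \<and> tail G e = v \<and> lab G e = i) \<and>
     (\<exists>!e. e \<in> arcs G \<and> head G e = v \<and> lab G e = i))"

text \<open>Z is (identified with) a subgraph of Y: an injective, label-preserving
  combinatorial graph map Z \<rightarrow> Y commuting with the maps to X.\<close>
definition subgraph_embedding ::
  "('v, 'e) lgraph \<Rightarrow> ('w, 'f) lgraph \<Rightarrow> ('v \<Rightarrow> 'w) \<Rightarrow> ('e \<Rightarrow> 'f) \<Rightarrow> bool" where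
  "subgraph_embedding Z Y fv fe \<longleftrightarrow>
     inj_on fv (verts Z) \<and> inj_on fe (arcs Z) \<and>
     fv ` verts Z \<subseteq> verts Y \<and> fe ` arcs Z \<subseteq> arcs Y \<and>
     (\<forall>e\<in>arcs Z. tail Y (fe e) = fv (tail Z e) \<and> head Y (fe e) = fv (head Z e)
                 \<and> lab Y (fe e) = lab Z e)"

text \<open>Action of the generator alpha_(i+1) on the vertices of a covering by path
  lifting: u is sent to the head of the unique edge labelled i leaving u.\<close>
definition gen_perm :: "('v, 'e) lgraph \<Rightarrow> nat \<Rightarrow> 'v \<Rightarrow> 'v" where
  "gen_perm Y i = (\<lambda>u\<in>verts Y. head Y (THE e. e \<in> arcs Y \<and> tail Y e = u \<and> lab Y e = i))"

text \<open>Image of F \<rightarrow> Sym(V(Y)): the subgroup of Sym(V(Y)) generated by the images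
  of the free generators.\<close>
definition monodromy_image :: "nat \<Rightarrow> ('v, 'e) lgraph \<Rightarrow> ('v \<Rightarrow> 'v) set" where
  "monodromy_image r Y = generate (BijGroup (verts Y)) (gen_perm Y ` {..<r})"

end

theory Submission
  imports Defs "HOL-Combinatorics.Cycles"
begin

text \<open>
  Number the n vertices of the immersed graph Z by 0, ..., n-1.  Each label i then gives a
  partial injection of {..<n}, and Z not being a covering means that for some label j and
  some a, b the number a has no outgoing and b no incoming j-arc.  We extend the partial
  injections of the labels i \<noteq> j to permutations P_i, extend the one of j to a bijection
  Q : {..<n} - {a} \<rightarrow> {..<n} - {b}, and add 2q (or 2q + 1) new vertices: label k \<noteq> j gets
  an extra q-cycle x_0 \<rightarrow> ... \<rightarrow> x_(q-1), where P_k^(q-1) = id, and label j closes the gap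
  from a to b along a path through all new vertices.  Any family of permutations of {..<N}
  defines a covering of the rose (section "The covering defined by a permutation
  representation") whose monodromy group is generated by them.

  The monodromy group is the full symmetric group by Jordan's argument: (q-1) times label k
  and its conjugate by label j are cycles meeting in one point, so their commutator is a
  3-cycle; 3-cycles spread along the connected graph to give all 3-cycles, hence the
  alternating group; and the extra vertex is used, if needed, to make label j odd.
\<close>

abbreviation pinv :: "('a \<Rightarrow> 'b) \<Rightarrow> 'b \<Rightarrow> 'a" where
  "pinv f \<equiv> inv_into UNIV f"

section \<open>Three-cycles\<close>

definition cyc3 :: "'a \<Rightarrow> 'a \<Rightarrow> 'a \<Rightarrow> 'a \<Rightarrow> 'a" where
  "cyc3 a b c = (\<lambda>x. if x = a then b else if x = b then c else if x = c then a else x)"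

lemma cyc3_conj:
  assumes "bij g" shows "g \<circ> cyc3 a b c \<circ> pinv g = cyc3 (g a) (g b) (g c)"
proof
  fix x
  obtain w where w: "x = g w" using assms by (metis bij_pointE)
  have inv: "pinv g (g w) = w" using assms by (simp add: bij_is_inj)
  have eq: "g w = g z \<longleftrightarrow> w = z" for z using assms by (metis bij_is_inj injD)
  show "(g \<circ> cyc3 a b c \<circ> pinv g) x = cyc3 (g a) (g b) (g c) x"
    unfolding w by (simp add: inv eq cyc3_def)
qed

lemma cyc3_square: "distinct [a, b, c] \<Longrightarrow> cyc3 a b c \<circ> cyc3 a b c = cyc3 a c b"
  by (auto simp: cyc3_def fun_eq_iff)

lemma cyc3_rotate: "distinct [a, b, c] \<Longrightarrow> cyc3 a b c = cyc3 b c a"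
  by (auto simp: cyc3_def fun_eq_iff)

lemma cyc3_permutes:
  assumes "a \<in> S" "b \<in> S" "c \<in> S" "distinct [a, b, c]"
  shows "cyc3 a b c permutes S"
proof (rule bij_imp_permutes)
  have cube: "cyc3 a b c (cyc3 a b c (cyc3 a b c x)) = x" for x
    using assms(4) by (auto simp: cyc3_def)
  show "bij_betw (cyc3 a b c) S S"
    by (rule bij_betw_byWitness[where f' = "\<lambda>x. cyc3 a b c (cyc3 a b c x)"])
       (use cube assms in \<open>auto simp: cyc3_def\<close>)
  show "x \<notin> S \<Longrightarrow> cyc3 a b c x = x" for x
    using assms by (auto simp: cyc3_def)
qed

text \<open>Products of two transpositions are products of 3-cycles; this is why 3-cycles
  generate the even permutations.\<close>
lemma transpose_pair_overlap:
  "distinct [a, b, d] \<Longrightarrow> transpose a b \<circ> transpose a d = cyc3 a d b"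
  by (auto simp: fun_eq_iff transpose_def cyc3_def)

lemma transpose_pair_disjoint:
  "distinct [a, b, c, d] \<Longrightarrow> transpose a b \<circ> transpose c d = cyc3 b c a \<circ> cyc3 c d b"
  by (auto simp: fun_eq_iff transpose_def cyc3_def)

text \<open>The commutator of two permutations whose supports meet in exactly one point x
  is a 3-cycle through x.  This is the source of the first 3-cycle in the monodromy group.\<close>
lemma commutator_cyc3:
  assumes g: "bij g" and h: "bij h" and gx: "g x \<noteq> x" and hx: "h x \<noteq> x"
    and disjoint: "\<And>y. y \<noteq> x \<Longrightarrow> g y = y \<or> h y = y"
  shows "g \<circ> h \<circ> pinv g \<circ> pinv h = cyc3 x (g x) (h x)"
proof
  fix z
  have g_inv: "g (pinv g y) = y" "pinv g (g y) = y" for y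
    using g by (simp_all add: bij_is_surj surj_f_inv_f bij_is_inj)
  have h_inv: "h (pinv h y) = y" "pinv h (h y) = y" for y
    using h by (simp_all add: bij_is_surj surj_f_inv_f bij_is_inj)
  have hgx: "h (g x) = g x" using disjoint[of "g x"] gx g_inv by metis
  have ghx: "g (h x) = h x" using disjoint[of "h x"] hx h_inv by metis
  have gxhx: "g x \<noteq> h x" using hgx hx h_inv by metis
  show "(g \<circ> h \<circ> pinv g \<circ> pinv h) z = cyc3 x (g x) (h x) z"
    using g_inv h_inv hgx ghx gxhx disjoint gx hx unfolding cyc3_def comp_def
    by (smt (verit))
qed

section \<open>Subgroups of a finite symmetric group containing many 3-cycles\<close>

text \<open>H is a subgroup of the symmetric group Bij(V); we phrase membership for
  arbitrary functions through their restriction to V, so that permutations in the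
  sense of permutes can be used directly.\<close>
locale perm_subgroup =
  fixes V :: "'a set" and H :: "('a \<Rightarrow> 'a) set"
  assumes finite_V: "finite V" and subgroup_H: "subgroup H (BijGroup V)"
begin

definition inH :: "('a \<Rightarrow> 'a) \<Rightarrow> bool" where
  "inH p \<longleftrightarrow> restrict p V \<in> H"

lemma H_Bij: "f \<in> H \<Longrightarrow> f \<in> Bij V"
  using subgroup.subset[OF subgroup_H] by (auto simp: BijGroup_def)

lemma inH_id: "inH id"
proof -
  have "one (BijGroup V) = restrict id V" by (auto simp: BijGroup_def id_def)
  then show ?thesis using subgroup.one_closed[OF subgroup_H] by (simp add: inH_def)
qed

lemma inH_maps: "inH p \<Longrightarrow> x \<in> V \<Longrightarrow> p x \<in> V"
  using H_Bij by (fastforce simp: inH_def Bij_def bij_betw_def)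

lemma inH_comp:
  assumes "inH p" "inH q" shows "inH (p \<circ> q)"
proof -
  have "restrict p V \<otimes>\<^bsub>BijGroup V\<^esub> restrict q V = restrict (p \<circ> q) V"
    using assms H_Bij inH_maps[OF assms(2)] by (auto simp: BijGroup_def inH_def compose_def)
  then show ?thesis
    using assms subgroup.m_closed[OF subgroup_H] unfolding inH_def by metis
qed

lemma inH_inv:
  assumes "inH p" "p permutes V" shows "inH (pinv p)"
proof -
  have B: "restrict p V \<in> Bij V" using assms H_Bij by (auto simp: inH_def)
  have "m_inv (BijGroup V) (restrict p V) = restrict (pinv p) V"
  proof
    fix y
    show "m_inv (BijGroup V) (restrict p V) y = restrict (pinv p) V y"
    proof (cases "y \<in> V")
      case True
      have "pinv p y \<in> V" "p (pinv p y) = y"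
        using True assms(2) by (simp_all add: permutes_inv permutes_in_image permutes_inverses)
      then have "inv_into V (restrict p V) y = pinv p y"
        using B by (intro inv_into_f_eq) (auto simp: Bij_def bij_betw_def)
      then show ?thesis using True by (simp add: inv_BijGroup[OF B])
    qed (simp add: inv_BijGroup[OF B])
  qed
  then show ?thesis
    using assms subgroup.m_inv_closed[OF subgroup_H] unfolding inH_def by metis
qed

lemma inH_funpow: "inH p \<Longrightarrow> inH (p ^^ t)"
proof (induct t)
  case 0 then show ?case using inH_id by (simp add: id_def)
next
  case (Suc t) then show ?case using inH_comp by (simp only: funpow.simps(2))
qed

lemma inH_conj: "inH g \<Longrightarrow> g permutes V \<Longrightarrow> inH t \<Longrightarrow> inH (g \<circ> t \<circ> pinv g)"
  by (intro inH_comp inH_inv)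

lemma inH_cyc3_conj:
  assumes "inH g" "g permutes V" "inH (cyc3 a b c)"
  shows "inH (cyc3 (g a) (g b) (g c))"
  using inH_conj[OF assms] cyc3_conj[of g a b c] assms(2) by (simp add: permutes_bij)

lemma inH_cyc3_inverse:
  "inH (cyc3 a b c) \<Longrightarrow> distinct [a, b, c] \<Longrightarrow> inH (cyc3 a c b)"
  using inH_comp cyc3_square by metis

definition has_3cycles :: "'a set \<Rightarrow> bool" where
  "has_3cycles S \<longleftrightarrow> (\<forall>a\<in>S. \<forall>b\<in>S. \<forall>c\<in>S. distinct [a, b, c] \<longrightarrow> inH (cyc3 a b c))"

lemma has_3cycles_triple:
  assumes "inH (cyc3 a b c)" "distinct [a, b, c]" shows "has_3cycles {a, b, c}"
proof -
  have "inH (cyc3 a c b)" using inH_cyc3_inverse[OF assms] .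
  then show ?thesis
    using assms cyc3_rotate[of a b c] cyc3_rotate[of b c a] cyc3_rotate[of a c b]
      cyc3_rotate[of c b a]
    unfolding has_3cycles_def by auto
qed

lemma has_3cycles_image:
  assumes "inH g" "g permutes V" "has_3cycles S" shows "has_3cycles (g ` S)"
  unfolding has_3cycles_def
proof (intro ballI impI)
  fix a b c assume "a \<in> g ` S" "b \<in> g ` S" "c \<in> g ` S" "distinct [a, b, c]"
  then obtain a' b' c' where "a' \<in> S" "b' \<in> S" "c' \<in> S" "a = g a'" "b = g b'" "c = g c'"
    and "distinct [a', b', c']" by auto
  then show "inH (cyc3 a b c)"
    using inH_cyc3_conj[OF assms(1,2)] assms(3) unfolding has_3cycles_def by blast
qed

text \<open>One 3-cycle (y u v) through a new point y suffices to reach every 3-cycle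
  (y p q) with p, q in S: conjugate by 3-cycles of S fixing y that move u, v to p, q.\<close>
lemma cyc3_new_point:
  assumes S: "has_3cycles S" "S \<subseteq> V" and uv: "u \<in> S" "v \<in> S" "u \<noteq> v"
    and y: "y \<notin> S" and t: "inH (cyc3 y u v)"
    and pq: "p \<in> S" "q \<in> S" "p \<noteq> q"
  shows "inH (cyc3 y p q)"
proof -
  have cS: "inH (cyc3 a b c) \<and> cyc3 a b c permutes V"
    if "a \<in> S" "b \<in> S" "c \<in> S" "distinct [a, b, c]" for a b c
    using S that cyc3_permutes[of a V b c] unfolding has_3cycles_def by blast
  have moved: "inH (cyc3 y (\<sigma> u) (\<sigma> v))" if "inH \<sigma>" "\<sigma> permutes V" "\<sigma> y = y" for \<sigma>
    using inH_cyc3_conj[OF that(1,2) t] that(3) by simp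
  have fix_y: "cyc3 a b c y = y" if "a \<in> S" "b \<in> S" "c \<in> S" for a b c
    using y that by (auto simp: cyc3_def)
  have yd: "y \<noteq> p" "y \<noteq> q" "y \<noteq> u" "y \<noteq> v" using pq uv y by auto
  consider "p = u" "q = v" | "p = v" "q = u" | "p = u" "q \<noteq> v" | "p = v" "q \<noteq> u"
    | "q = u" "p \<noteq> v" | "q = v" "p \<noteq> u" | "p \<noteq> u" "p \<noteq> v" "q \<noteq> u" "q \<noteq> v"
    using pq by blast
  then show ?thesis
  proof cases
    case 1 then show ?thesis using t by simp
  next
    case 2 then show ?thesis using inH_cyc3_inverse[OF t] yd uv by simp
  next
    case 3
    have "inH (cyc3 y q u)"
      using moved[of "cyc3 v u q"] cS[of v u q] fix_y[of v u q] 3 uv pq yd by (simp add: cyc3_def)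
    then show ?thesis using inH_cyc3_inverse[of y q u] 3 yd pq by simp
  next
    case 4
    show ?thesis
      using moved[of "cyc3 u v q"] cS[of u v q] fix_y[of u v q] 4 uv pq yd by (simp add: cyc3_def)
  next
    case 5
    show ?thesis
      using moved[of "cyc3 v u p"] cS[of v u p] fix_y[of v u p] 5 uv pq yd by (simp add: cyc3_def)
  next
    case 6
    have "inH (cyc3 y v p)"
      using moved[of "cyc3 u v p"] cS[of u v p] fix_y[of u v p] 6 uv pq yd by (simp add: cyc3_def)
    then show ?thesis using inH_cyc3_inverse[of y v p] 6 yd pq by simp
  next
    case 7
    let ?s = "cyc3 u q v \<circ> cyc3 u p v"
    have "inH ?s" "?s permutes V"
      using cS[of u q v] cS[of u p v] 7 uv pq by (auto intro: inH_comp permutes_compose)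
    moreover have "?s y = y" using fix_y[of u p v] fix_y[of u q v] uv pq by simp
    ultimately have "inH (cyc3 y (?s u) (?s v))" by (rule moved)
    moreover have "?s u = p" "?s v = q" using 7 uv pq by (auto simp: cyc3_def)
    ultimately show ?thesis by simp
  qed
qed

lemma has_3cycles_insert:
  assumes S: "has_3cycles S" "S \<subseteq> V" and uv: "u \<in> S" "v \<in> S" "u \<noteq> v"
    and y: "y \<notin> S" and t: "inH (cyc3 y u v)"
  shows "has_3cycles (insert y S)"
proof -
  have new: "inH (cyc3 y p q)" if "p \<in> S" "q \<in> S" "p \<noteq> q" for p q
    using cyc3_new_point[OF assms that] .
  show ?thesis unfolding has_3cycles_def
  proof (intro ballI impI)
    fix a b c assume abc: "a \<in> insert y S" "b \<in> insert y S" "c \<in> insert y S" "distinct [a, b, c]"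
    then consider "a = y" | "b = y" | "c = y" | "a \<in> S" "b \<in> S" "c \<in> S" by auto
    then show "inH (cyc3 a b c)"
    proof cases
      case 1 then show ?thesis using new[of b c] abc by auto
    next
      case 2 then show ?thesis using new[of c a] abc cyc3_rotate[of a b c] by auto
    next
      case 3 then show ?thesis
        using new[of a b] abc cyc3_rotate[of a b c] cyc3_rotate[of b c a] by auto
    next
      case 4 then show ?thesis using S abc unfolding has_3cycles_def by auto
    qed
  qed
qed

text \<open>Two sets carrying all 3-cycles and sharing two points: their union carries all
  3-cycles (add the points of T one at a time).\<close>
lemma has_3cycles_union:
  assumes "has_3cycles S" "has_3cycles T" "S \<subseteq> V" "T \<subseteq> V"
    and "u \<in> S" "v \<in> S" "u \<in> T" "v \<in> T" "u \<noteq> v"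
  shows "has_3cycles (S \<union> T)"
proof -
  have "finite T" using assms(4) finite_V finite_subset by blast
  have "has_3cycles (S \<union> F)" if "F \<subseteq> T" for F
    using finite_subset[OF that \<open>finite T\<close>] that
  proof (induct F rule: finite_induct)
    case empty then show ?case using assms by simp
  next
    case (insert y F)
    show ?case
    proof (cases "y \<in> S \<union> F")
      case True then show ?thesis using insert by (simp add: insert_absorb)
    next
      case False
      have "y \<noteq> u" "y \<noteq> v" using False assms(5,6) by auto
      then have "inH (cyc3 y u v)"
        using assms(2,7-9) insert(4) unfolding has_3cycles_def by auto
      then have "has_3cycles (insert y (S \<union> F))"
        using has_3cycles_insert[of "S \<union> F" u v y] insert assms False by auto
      then show ?thesis by simp
    qed
  qed
  then show ?thesis by simp
qed

text \<open>Proof: take a maximal superset S of S0 carrying all 3-cycles; S \<union> g S still does.\<close>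
lemma has_3cycles_grow:
  assumes S0: "has_3cycles S0" "S0 \<subseteq> V"
    and G: "\<And>g. g \<in> G \<Longrightarrow> inH g \<and> g permutes V"
    and two: "\<And>g. g \<in> G \<Longrightarrow> \<exists>u v. u \<in> S0 \<and> v \<in> S0 \<and> g u \<in> S0 \<and> g v \<in> S0 \<and> u \<noteq> v"
    and invariant: "\<And>T. S0 \<subseteq> T \<Longrightarrow> T \<subseteq> V \<Longrightarrow> (\<And>g. g \<in> G \<Longrightarrow> g ` T \<subseteq> T) \<Longrightarrow> T = V"
  shows "has_3cycles V"
proof -
  let ?P = "\<lambda>S. S0 \<subseteq> S \<and> S \<subseteq> V \<and> has_3cycles S"
  obtain S where S: "?P S" and max: "\<And>S'. ?P S' \<Longrightarrow> card S' \<le> card S"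
    using ex_has_greatest_nat[of ?P S0 card "Suc (card V)"] S0 finite_V
    by (auto simp: card_mono le_imp_less_Suc)
  have "finite S" using S finite_V finite_subset by blast
  have "g ` S \<subseteq> S" if gG: "g \<in> G" for g
  proof -
    have g: "inH g" "g permutes V" using G[OF gG] by auto
    obtain u v where uv: "u \<in> S0" "v \<in> S0" "g u \<in> S0" "g v \<in> S0" "u \<noteq> v"
      using two[OF gG] by blast
    have gS: "g ` S \<subseteq> V" using S permutes_image[OF g(2)] by blast
    have "g u \<noteq> g v" using uv(5) g(2) by (metis permutes_inj injD)
    moreover have "has_3cycles (g ` S)" using has_3cycles_image[OF g] S by blast
    ultimately have "has_3cycles (S \<union> g ` S)"
      using has_3cycles_union[of S "g ` S" "g u" "g v"] S uv gS by auto
    then have "card (S \<union> g ` S) \<le> card S" using S gS by (intro max) auto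
    then have "S \<union> g ` S = S" using card_seteq[of "S \<union> g ` S" S] \<open>finite S\<close> by auto
    then show ?thesis by blast
  qed
  then show ?thesis using invariant S by auto
qed

lemma inH_transpose_pair:
  assumes "has_3cycles V" "a \<in> V" "b \<in> V" "c \<in> V" "d \<in> V" "a \<noteq> b" "c \<noteq> d"
  shows "inH (transpose a b \<circ> transpose c d)"
proof -
  have C: "inH (cyc3 x y z)" if "x \<in> V" "y \<in> V" "z \<in> V" "distinct [x, y, z]" for x y z
    using assms(1) that unfolding has_3cycles_def by blast
  consider "a = c" "b = d" | "a = d" "b = c" | "a = c" "b \<noteq> d" | "a = d" "b \<noteq> c"
    | "b = c" "a \<noteq> d" | "b = d" "a \<noteq> c" | "distinct [a, b, c, d]"
    using assms by auto
  then show ?thesis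
  proof cases
    case 1 then show ?thesis using inH_id by (simp add: id_def)
  next
    case 2 then show ?thesis using inH_id by (simp add: transpose_commute id_def)
  next
    case 3 then show ?thesis using transpose_pair_overlap[of a b d] C[of a d b] assms by simp
  next
    case 4 then show ?thesis
      using transpose_pair_overlap[of a b c] C[of a c b] assms transpose_commute[of c d] by simp
  next
    case 5 then show ?thesis
      using transpose_pair_overlap[of b a d] C[of b d a] assms transpose_commute[of a b] by simp
  next
    case 6 then show ?thesis
      using transpose_pair_overlap[of b a c] C[of b c a] assms transpose_commute[of a b]
        transpose_commute[of c d] by simp
  next
    case 7 then show ?thesis
      using transpose_pair_disjoint[of a b c d] C[of b c a] C[of c d b] assms inH_comp
      by (simp add: eq_commute)
  qed
qed

text \<open>If H contains all 3-cycles of V then it contains every even permutation of V, and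
  (the induction needs this strengthening) t \<circ> p for every transposition t of V and odd p.\<close>
lemma parity_inH:
  assumes "has_3cycles V" "p permutes V"
  shows "(evenperm p \<longrightarrow> inH p) \<and>
    (\<not> evenperm p \<longrightarrow> (\<forall>c\<in>V. \<forall>d\<in>V. c \<noteq> d \<longrightarrow> inH (transpose c d \<circ> p)))"
  using assms(2) finite_V
proof (induct rule: permutes_induct)
  case id then show ?case using inH_id by (simp add: id_def)
next
  case (swap a b p)
  have "permutation p" using swap(5) finite_V permutation_permutes by blast
  then have parity: "evenperm (transpose a b \<circ> p) = (\<not> evenperm p)"
    using evenperm_comp[OF permutation_swap_id, of p a b] evenperm_swap[of a b] swap(3) by simp
  show ?case
  proof (cases "evenperm p")
    case True
    have "inH (transpose c d \<circ> (transpose a b \<circ> p))" if "c \<in> V" "d \<in> V" "c \<noteq> d" for c d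
      using inH_comp[OF inH_transpose_pair[OF assms(1) that(1,2) swap(1,2) that(3) swap(3)]]
        swap(4) True by (simp add: comp_assoc)
    with parity True show ?thesis by blast
  next
    case False
    then have "inH (transpose a b \<circ> p)" using swap(1-4) by blast
    with parity False show ?thesis by blast
  qed
qed

lemma full_symmetric:
  assumes A: "has_3cycles V" and odd: "inH s" "s permutes V" "\<not> evenperm s"
  shows "H = carrier (BijGroup V)"
proof
  show "H \<subseteq> carrier (BijGroup V)" using subgroup.subset[OF subgroup_H] .
  have all: "inH p" if p: "p permutes V" for p
  proof (cases "evenperm p")
    case True then show ?thesis using parity_inH[OF A p] by simp
  next
    case False
    have perms: "permutation p" "permutation s"
      using p odd finite_V permutation_permutes by blast+
    have "evenperm (p \<circ> pinv s)" "(p \<circ> pinv s) permutes V"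
      using evenperm_comp[OF perms(1) permutation_inverse[OF perms(2)]] evenperm_inv[OF perms(2)]
        False odd p by (simp_all add: permutes_compose permutes_inv)
    then have "inH ((p \<circ> pinv s) \<circ> s)" using parity_inH[OF A] odd(1) inH_comp by blast
    then show ?thesis using permutes_inv_o(2)[OF odd(2)] by (simp add: comp_assoc)
  qed
  show "carrier (BijGroup V) \<subseteq> H"
  proof
    fix f assume "f \<in> carrier (BijGroup V)"
    then have f: "f \<in> Bij V" by (simp add: BijGroup_def)
    let ?p = "\<lambda>x. if x \<in> V then f x else x"
    have "bij_betw ?p V V" using f unfolding Bij_def by (auto intro: bij_betw_cong[THEN iffD1])
    then have "?p permutes V" by (rule bij_imp_permutes) auto
    moreover have "restrict ?p V = f" using f unfolding Bij_def by (auto simp: extensional_def fun_eq_iff)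
    ultimately show "f \<in> H" using all inH_def by metis
  qed
qed

end

lemma adj_sym: "(x, y) \<in> adj G \<Longrightarrow> (y, x) \<in> adj G"
  unfolding adj_def by blast

lemma connected_from_root:
  assumes "\<And>v. v \<in> verts G \<Longrightarrow> (x0, v) \<in> (adj G)\<^sup>*"
  shows "connected_lgraph G"
proof -
  have sym: "(y, x) \<in> (adj G)\<^sup>*" if "(x, y) \<in> (adj G)\<^sup>*" for x y
    using that by induct (auto intro: adj_sym rtrancl_trans[OF r_into_rtrancl])
  show ?thesis
    unfolding connected_lgraph_def using assms sym rtrancl_trans by metis
qed

lemma embedding_adj:
  assumes "subgraph_embedding Z Y fv fe" "(u, v) \<in> adj Z"
  shows "(fv u, fv v) \<in> adj Y"
proof -
  obtain e where e: "e \<in> arcs Z" "(u, v) = (tail Z e, head Z e) \<or> (v, u) = (tail Z e, head Z e)"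
    using assms(2) unfolding adj_def by blast
  have f: "fe e \<in> arcs Y" "tail Y (fe e) = fv (tail Z e)" "head Y (fe e) = fv (head Z e)"
    using assms(1) e(1) unfolding subgraph_embedding_def by auto
  have "(tail Y (fe e), head Y (fe e)) \<in> adj Y" "(head Y (fe e), tail Y (fe e)) \<in> adj Y"
    unfolding adj_def using f(1) by blast+
  then show ?thesis using e(2) f(2,3) by auto
qed

lemma embedding_rtrancl:
  assumes "subgraph_embedding Z Y fv fe" "(u, v) \<in> (adj Z)\<^sup>*"
  shows "(fv u, fv v) \<in> (adj Y)\<^sup>*"
  using assms(2) by induct (auto intro: rtrancl_into_rtrancl embedding_adj[OF assms(1)])

section \<open>The covering defined by a permutation representation\<close>

text \<open>Given permutations \<sigma> 0, ..., \<sigma> (r-1) of {..<N}, the graph with vertices {..<N} and,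
  for each vertex u and label i, one arc u * r + i from u to \<sigma> i u.  This is the
  covering of the rose whose monodromy action is the given one.\<close>
definition perm_graph :: "nat \<Rightarrow> nat \<Rightarrow> (nat \<Rightarrow> nat \<Rightarrow> nat) \<Rightarrow> (nat, nat) lgraph" where
  "perm_graph N r \<sigma> = \<lparr>verts = {..<N}, arcs = {..<N * r}, tail = \<lambda>x. x div r,
     head = \<lambda>x. \<sigma> (x mod r) (x div r), lab = \<lambda>x. x mod r\<rparr>"

locale perm_rep =
  fixes N r :: nat and \<sigma> :: "nat \<Rightarrow> nat \<Rightarrow> nat"
  assumes r_pos: "0 < r" and \<sigma>_permutes: "\<And>i. i < r \<Longrightarrow> \<sigma> i permutes {..<N}"
begin

abbreviation Y where "Y \<equiv> perm_graph N r \<sigma>"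

lemma arc_index: "u < N \<Longrightarrow> i < r \<Longrightarrow> u * r + i < N * r"
proof -
  assume "u < N" "i < r"
  then have "u * r + i < (u + 1) * r" by simp
  also have "\<dots> \<le> N * r" using \<open>u < N\<close> by (intro mult_right_mono) auto
  finally show ?thesis .
qed

lemma arc_decompose: "x \<in> arcs Y \<Longrightarrow> x = tail Y x * r + lab Y x \<and> tail Y x < N \<and> lab Y x < r"
  using r_pos by (simp add: perm_graph_def less_mult_imp_div_less)

lemma \<sigma>_in: "i < r \<Longrightarrow> u < N \<Longrightarrow> \<sigma> i u < N"
  using permutes_in_image[OF \<sigma>_permutes] by simp

lemma perm_graph_wf: "wf_lgraph r Y"
  using arc_decompose \<sigma>_in unfolding wf_lgraph_def by (simp add: perm_graph_def)

lemma perm_graph_finite: "finite_lgraph Y"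
  by (simp add: finite_lgraph_def perm_graph_def)

lemma out_arc: "u < N \<Longrightarrow> i < r \<Longrightarrow>
    x \<in> arcs Y \<and> tail Y x = u \<and> lab Y x = i \<longleftrightarrow> x = u * r + i"
  using arc_decompose[of x] arc_index by (auto simp: perm_graph_def)

lemma perm_graph_covering: "covering r Y"
  unfolding covering_def
proof (intro ballI allI impI conjI)
  fix v i assume v: "v \<in> verts Y" and i: "i < r"
  then have vN: "v < N" by (simp add: perm_graph_def)
  show "\<exists>!x. x \<in> arcs Y \<and> tail Y x = v \<and> lab Y x = i"
    using out_arc[OF vN i] by auto
  have inv: "pinv (\<sigma> i) v < N" "\<sigma> i (pinv (\<sigma> i) v) = v"
    using permutes_in_image[OF permutes_inv[OF \<sigma>_permutes[OF i]]] vN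
      permutes_inverses(1)[OF \<sigma>_permutes[OF i]] by simp_all
  have inj: "\<sigma> i w = v \<longleftrightarrow> w = pinv (\<sigma> i) v" for w
    using \<sigma>_permutes[OF i] inv(2) by (metis permutes_inj injD)
  show "\<exists>!x. x \<in> arcs Y \<and> head Y x = v \<and> lab Y x = i"
  proof
    show "pinv (\<sigma> i) v * r + i \<in> arcs Y \<and> head Y (pinv (\<sigma> i) v * r + i) = v
        \<and> lab Y (pinv (\<sigma> i) v * r + i) = i"
      using arc_index[OF inv(1) i] i inv(2) by (simp add: perm_graph_def)
    fix x assume x: "x \<in> arcs Y \<and> head Y x = v \<and> lab Y x = i"
    then have "\<sigma> i (x div r) = v" by (auto simp: perm_graph_def)
    then have "x div r = pinv (\<sigma> i) v" using inj by simp
    then show "x = pinv (\<sigma> i) v * r + i"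
      using arc_decompose[of x] x by (simp add: perm_graph_def)
  qed
qed

lemma gen_perm_perm_graph: "i < r \<Longrightarrow> gen_perm Y i = restrict (\<sigma> i) {..<N}"
proof
  fix u assume i: "i < r"
  show "gen_perm Y i u = restrict (\<sigma> i) {..<N} u"
  proof (cases "u < N")
    case True
    then have "(THE x. x \<in> arcs Y \<and> tail Y x = u \<and> lab Y x = i) = u * r + i"
      using out_arc[OF True i] by simp
    then show ?thesis using True i by (simp add: gen_perm_def perm_graph_def)
  qed (simp add: gen_perm_def perm_graph_def)
qed

lemma monodromy_perm_graph:
  "monodromy_image r Y = generate (BijGroup {..<N}) ((\<lambda>i. restrict (\<sigma> i) {..<N}) ` {..<r})"
proof -
  have "gen_perm Y ` {..<r} = (\<lambda>i. restrict (\<sigma> i) {..<N}) ` {..<r}"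
    using gen_perm_perm_graph by auto
  moreover have "verts Y = {..<N}" by (simp add: perm_graph_def)
  ultimately show ?thesis unfolding monodromy_image_def by simp
qed

lemma monodromy_subgroup: "perm_subgroup {..<N} (monodromy_image r Y)"
proof -
  have "(\<lambda>i. restrict (\<sigma> i) {..<N}) ` {..<r} \<subseteq> carrier (BijGroup {..<N})"
    using \<sigma>_permutes permutes_imp_bij
    by (fastforce simp: BijGroup_def Bij_def intro: bij_betw_cong[THEN iffD1])
  then have "subgroup (monodromy_image r Y) (BijGroup {..<N})"
    unfolding monodromy_perm_graph by (rule group.generate_is_subgroup[OF group_BijGroup])
  then show ?thesis unfolding perm_subgroup_def by simp
qed

sublocale monodromy: perm_subgroup "{..<N}" "monodromy_image r Y"
  by (rule monodromy_subgroup)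

lemma \<sigma>_in_monodromy: "i < r \<Longrightarrow> monodromy.inH (\<sigma> i)"
  using monodromy.inH_def monodromy_perm_graph by (auto intro: generate.incl)

lemma adj_step: "u < N \<Longrightarrow> i < r \<Longrightarrow> (u, \<sigma> i u) \<in> adj Y \<and> (\<sigma> i u, u) \<in> adj Y"
  using arc_index[of u i] unfolding adj_def
  by (auto simp: perm_graph_def intro!: exI[of _ "u * r + i"])

lemma invariant_closed:
  assumes T: "T \<subseteq> {..<N}" "\<And>i. i < r \<Longrightarrow> \<sigma> i ` T \<subseteq> T"
    and "x \<in> T" "(x, y) \<in> (adj Y)\<^sup>*"
  shows "y \<in> T"
  using assms(4)
proof induct
  case (step y z)
  then obtain e where e: "e \<in> arcs Y" "(y, z) = (tail Y e, head Y e) \<or> (z, y) = (tail Y e, head Y e)"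
    unfolding adj_def by blast
  define i where "i = lab Y e"
  have i: "i < r" "head Y e = \<sigma> i (tail Y e)"
    using arc_decompose[OF e(1)] by (simp_all add: i_def perm_graph_def)
  have "\<sigma> i ` T = T"
    using endo_inj_surj[OF finite_subset[OF T(1)] T(2)[OF i(1)]
        inj_on_subset[OF permutes_inj[OF \<sigma>_permutes[OF i(1)]] subset_UNIV]] by simp
  then show ?case
    using e(2) i step.hyps(3) permutes_inj[OF \<sigma>_permutes[OF i(1)]]
    by (auto dest: injD)
qed (rule assms(3))

lemma full_monodromy:
  assumes conn: "connected_lgraph Y"
    and cyc: "monodromy.inH (cyc3 x y z)"
    and S0: "distinct [x, y, z]" "{x, y, z} \<subseteq> {..<N}"
    and two: "\<And>i. i < r \<Longrightarrow> \<exists>u v. u \<in> {x, y, z} \<and> v \<in> {x, y, z} \<and>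
                    \<sigma> i u \<in> {x, y, z} \<and> \<sigma> i v \<in> {x, y, z} \<and> u \<noteq> v"
    and odd: "s < r" "\<not> evenperm (\<sigma> s)"
  shows "monodromy_image r Y = carrier (BijGroup (verts Y))"
proof -
  have "monodromy.has_3cycles {..<N}"
  proof (rule monodromy.has_3cycles_grow[OF monodromy.has_3cycles_triple[OF cyc S0(1)] S0(2)])
    show "\<And>g. g \<in> \<sigma> ` {..<r} \<Longrightarrow> monodromy.inH g \<and> g permutes {..<N}"
      using \<sigma>_in_monodromy \<sigma>_permutes by auto
    show "\<And>g. g \<in> \<sigma> ` {..<r} \<Longrightarrow> \<exists>u v. u \<in> {x, y, z} \<and> v \<in> {x, y, z} \<and>
        g u \<in> {x, y, z} \<and> g v \<in> {x, y, z} \<and> u \<noteq> v"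
      using two by auto
    fix T assume T: "{x, y, z} \<subseteq> T" "T \<subseteq> {..<N}" "\<And>g. g \<in> \<sigma> ` {..<r} \<Longrightarrow> g ` T \<subseteq> T"
    have "v \<in> T" if "v < N" for v
      using invariant_closed[OF T(2), of x v] T conn S0(2) that
      unfolding connected_lgraph_def by (auto simp: perm_graph_def)
    then show "T = {..<N}" using T(2) by auto
  qed
  then show ?thesis
    using monodromy.full_symmetric \<sigma>_in_monodromy[OF odd(1)] \<sigma>_permutes[OF odd(1)] odd(2)
    by (simp add: perm_graph_def)
qed

lemma embedding_into_perm_graph:
  assumes wf: "wf_lgraph r Z" and imm: "immersion r Z"
    and fv: "inj_on fv (verts Z)" "fv ` verts Z \<subseteq> {..<N}"
    and arcs: "\<And>e. e \<in> arcs Z \<Longrightarrow> \<sigma> (lab Z e) (fv (tail Z e)) = fv (head Z e)"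
  shows "subgraph_embedding Z Y fv (\<lambda>e. fv (tail Z e) * r + lab Z e)"
proof -
  define fe where "fe e = fv (tail Z e) * r + lab Z e" for e
  have e_ok: "tail Z e \<in> verts Z" "fv (tail Z e) < N" "lab Z e < r" if "e \<in> arcs Z" for e
    using wf fv(2) that unfolding wf_lgraph_def by auto
  have fe: "fe e \<in> arcs Y" "tail Y (fe e) = fv (tail Z e)" "lab Y (fe e) = lab Z e"
    if "e \<in> arcs Z" for e
    using e_ok[OF that] arc_index by (simp_all add: fe_def perm_graph_def)
  have "inj_on fe (arcs Z)"
  proof (rule inj_onI)
    fix e e' assume e: "e \<in> arcs Z" "e' \<in> arcs Z" "fe e = fe e'"
    then have "tail Z e = tail Z e'" "lab Z e = lab Z e'"
      using fe[of e] fe[of e'] fv(1) e_ok inj_on_eq_iff by metis+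
    then show "e = e'" using imm e e_ok unfolding immersion_def by blast
  qed
  moreover have "head Y (fe e) = fv (head Z e)" if "e \<in> arcs Z" for e
    using fe[OF that] arcs[OF that] by (simp add: perm_graph_def)
  ultimately show ?thesis
    using fv fe unfolding subgraph_embedding_def fe_def[symmetric]
    by (auto simp: perm_graph_def)
qed

end

section \<open>The covering built from an immersion\<close>

lemma endo_permutes:
  assumes "finite S" "f ` S \<subseteq> S" "inj_on f S" "\<And>x. x \<notin> S \<Longrightarrow> f x = x"
  shows "f permutes S"
  using assms endo_inj_surj[OF assms(1-3)] by (intro bij_imp_permutes) (auto simp: bij_betw_def)

text \<open>The old vertices are 0, ..., n-1; the new vertices are x_t = n + t and y_t = n + q + t
  for t < q, plus one extra vertex z = n + 2q if the flag \<open>extra\<close> is set.  Label j, which is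
  missing at a (outgoing) and at b (incoming), is completed along the path
  a \<rightarrow> y_0 \<rightarrow> x_1 \<rightarrow> y_1 \<rightarrow> ... \<rightarrow> x_(q-1) \<rightarrow> y_(q-1) (\<rightarrow> z) \<rightarrow> b, with a loop at x_0;
  on old vertices it is Q.  The flag lengthens the path by one edge to fix the parity.\<close>
definition path_perm :: "nat \<Rightarrow> nat \<Rightarrow> nat \<Rightarrow> nat \<Rightarrow> (nat \<Rightarrow> nat) \<Rightarrow> bool \<Rightarrow> nat \<Rightarrow> nat" where
  "path_perm n q a b Q extra x =
     (if x < n then (if x = a then n + q else Q x)
      else if x = n then n
      else if x < n + q then x + q
      else if x < n + 2*q - 1 then x - q + 1
      else if x = n + 2*q - 1 then (if extra then n + 2*q else b)
      else if extra \<and> x = n + 2*q then b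
      else x)"

definition cycle_perm :: "nat \<Rightarrow> nat \<Rightarrow> (nat \<Rightarrow> nat) \<Rightarrow> nat \<Rightarrow> nat" where
  "cycle_perm n q p x = (if x < n then p x else if x < n + q then n + ((x - n + 1) mod q) else x)"

definition old_perm :: "nat \<Rightarrow> (nat \<Rightarrow> nat) \<Rightarrow> nat \<Rightarrow> nat" where
  "old_perm n p x = (if x < n then p x else x)"

lemma path_perm_flag:
  assumes "q \<ge> 1" "b < n" "\<And>x. x < n \<Longrightarrow> x \<noteq> a \<Longrightarrow> Q x < n \<and> Q x \<noteq> b"
  shows "path_perm n q a b Q True = transpose b (n + 2*q) \<circ> path_perm n q a b Q False"
proof
  fix x
  show "path_perm n q a b Q True x = (transpose b (n + 2*q) \<circ> path_perm n q a b Q False) x"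
  proof (cases "x = n + 2*q - 1 \<or> x = n + 2*q")
    case True then show ?thesis using assms by (auto simp: path_perm_def)
  next
    case False
    then have "path_perm n q a b Q False x \<noteq> b \<and> path_perm n q a b Q False x \<noteq> n + 2*q"
      using assms(1,2) assms(3)[of x] unfolding path_perm_def by auto
    then show ?thesis using False by (simp add: path_perm_def)
  qed
qed

text \<open>The data of the construction: the partial permutations of the immersed graph,
  numbered 0, ..., n-1, extended to permutations P_i (i \<noteq> j) of {..<n} and to a
  bijection Q from {..<n} - {a} to {..<n} - {b} for the label j; the label k \<noteq> j
  satisfies P_k^(q-1) = id.\<close>
locale cover_construction =
  fixes n r j k a b q :: nat and extra :: bool and P :: "nat \<Rightarrow> nat \<Rightarrow> nat" and Q :: "nat \<Rightarrow> nat"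
  assumes jr: "j < r" and kr: "k < r" and jk: "j \<noteq> k"
    and an: "a < n" and bn: "b < n" and q2: "q \<ge> 2"
    and P_permutes: "\<And>i. P i permutes {..<n}"
    and Pk_order: "P k ^^ (q - 1) = id"
    and Q_bij: "bij_betw Q ({..<n} - {a}) ({..<n} - {b})"
begin

definition N :: nat where "N = n + 2*q + (if extra then 1 else 0)"

abbreviation pj where "pj \<equiv> path_perm n q a b Q extra"
abbreviation pk where "pk \<equiv> cycle_perm n q (P k)"

definition \<pi> :: "nat \<Rightarrow> nat \<Rightarrow> nat" where
  "\<pi> i = (if i = j then pj else if i = k then pk else old_perm n (P i))"

lemma \<pi>_j: "\<pi> j = pj" by (simp add: \<pi>_def)
lemma \<pi>_k: "\<pi> k = pk" using jk by (simp add: \<pi>_def)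

lemma N_ge: "n + 2*q \<le> N" by (simp add: N_def)

lemma Q_props: "x < n \<Longrightarrow> x \<noteq> a \<Longrightarrow> Q x < n \<and> Q x \<noteq> b"
  using Q_bij unfolding bij_betw_def by auto

lemma P_lt: "x < n \<Longrightarrow> P i x < n"
  using permutes_in_image[OF P_permutes[of i]] by simp

lemma pj_old: "x < n \<Longrightarrow> x \<noteq> a \<Longrightarrow> pj x = Q x"
  by (simp add: path_perm_def)
lemma pj_a: "pj a = n + q" using an by (simp add: path_perm_def)
lemma pj_x0: "pj n = n" by (simp add: path_perm_def)
lemma pj_x: "n < x \<Longrightarrow> x < n + q \<Longrightarrow> pj x = x + q" by (simp add: path_perm_def)
lemma pj_y: "n + q \<le> x \<Longrightarrow> x < n + 2*q - 1 \<Longrightarrow> pj x = x - q + 1"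
  using q2 by (simp add: path_perm_def)
lemma pj_y_last: "pj (n + 2*q - 1) = (if extra then n + 2*q else b)"
proof -
  have "\<not> n + 2*q - 1 < n + q" "\<not> n + 2*q - 1 < n" "n + 2*q - 1 \<noteq> n" using q2 by arith+
  then show ?thesis by (simp add: path_perm_def)
qed

lemma pj_permutes: "pj permutes {..<N}"
proof (rule endo_permutes)
  show "pj ` {..<N} \<subseteq> {..<N}"
  proof
    fix y assume "y \<in> pj ` {..<N}"
    then obtain x where "x < N" "y = pj x" by blast
    then show "y \<in> {..<N}" using an bn q2 Q_props[of x] by (auto simp: path_perm_def N_def)
  qed
  show "\<And>x. x \<notin> {..<N} \<Longrightarrow> pj x = x" using q2 by (auto simp: path_perm_def N_def)
  show "inj_on pj {..<N}"
  proof (rule inj_on_inverseI)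
    let ?Qi = "inv_into ({..<n} - {a}) Q"
    let ?inv = "\<lambda>y. if y < n then (if y = b then (if extra then n + 2*q else n + 2*q - 1) else ?Qi y)
       else if y = n then n else if y < n + q then y + q - 1 else if y = n + q then a
       else if y < n + 2*q then y - q else if y = n + 2*q then n + 2*q - 1 else y"
    fix x assume x: "x \<in> {..<N}"
    have Qi: "x < n \<Longrightarrow> x \<noteq> a \<Longrightarrow> ?Qi (Q x) = x"
      using Q_bij by (simp add: bij_betw_def inv_into_f_f)
    show "?inv (pj x) = x"
    proof (cases "x < n")
      case True then show ?thesis using Qi Q_props[of x] an bn q2 by (auto simp: path_perm_def)
    next
      case False
      have "x < n + 2*q + 1" "extra \<or> x < n + 2*q" using x by (auto simp: N_def split: if_splits)
      then consider "x = n" | "n < x \<and> x < n + q" | "n + q \<le> x \<and> x < n + 2*q - 1"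
        | "x = n + 2*q - 1" | "x = n + 2*q" "extra"
        using False by linarith
      then show ?thesis
      proof cases
        case 3
        have "pj x = x - q + 1" using 3 by (simp add: pj_y)
        moreover have "x - q + 1 \<ge> n + 1" "x - q + 1 < n + q" "x - q + 1 + q - 1 = x"
          using 3 q2 by arith+
        ultimately show ?thesis by simp
      next
        case 4
        have "\<not> n + 2*q < n + q" "\<not> n + 2*q < n" "n + 2*q \<noteq> n" "n + 2*q \<noteq> n + q"
          "\<not> n + 2*q < n + 2*q" using q2 by arith+
        moreover have "pj x = (if extra then n + 2*q else b)" using 4 pj_y_last by simp
        ultimately show ?thesis using 4 bn by (cases extra) simp_all
      next
        case 5
        have "\<not> n + 2*q < n" "n + 2*q \<noteq> n" "\<not> n + 2*q < n + q" "\<not> n + 2*q < n + 2*q - 1"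
          "n + 2*q \<noteq> n + 2*q - 1" using q2 by arith+
        then have "pj x = b" using 5 by (simp add: path_perm_def)
        then show ?thesis using 5 bn by simp
      qed (use q2 in \<open>simp_all add: path_perm_def\<close>)
    qed
  qed
qed simp

lemma mod_succ_inj: "i < q \<Longrightarrow> i' < q \<Longrightarrow> (i + 1) mod q = (i' + 1) mod q \<Longrightarrow> i = i'"
  by (auto simp: mod_if split: if_splits)

lemma pk_permutes: "pk permutes {..<N}"
proof (rule endo_permutes)
  have mod_q: "Suc (x - n) mod q < q" for x using q2 by simp
  show "pk ` {..<N} \<subseteq> {..<N}"
  proof
    fix y assume "y \<in> pk ` {..<N}"
    then obtain x where x: "x < N" "y = pk x" by blast
    then have "pk x < n + q \<or> pk x = x" using P_lt[of x k] mod_q[of x] by (auto simp: cycle_perm_def)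
    then show "y \<in> {..<N}" using x N_ge by auto
  qed
  show "\<And>x. x \<notin> {..<N} \<Longrightarrow> pk x = x" using q2 by (auto simp: cycle_perm_def N_def)
  show "inj_on pk {..<N}"
  proof (rule inj_onI)
    fix x y assume xy: "x \<in> {..<N}" "y \<in> {..<N}" "pk x = pk y"
    have inj: "inj (P k)" using P_permutes[of k] by (simp add: permutes_inj)
    consider "x < n" | "n \<le> x" "x < n + q" | "n + q \<le> x" by linarith
    then show "x = y"
    proof cases
      case 1
      then have "pk x < n" using P_lt by (simp add: cycle_perm_def)
      then have "y < n" using xy(3) mod_q[of y] by (auto simp: cycle_perm_def split: if_splits)
      then show ?thesis using 1 xy(3) inj by (simp add: cycle_perm_def inj_eq)
    next
      case 2
      then have "n \<le> pk x \<and> pk x < n + q" using mod_q[of x] by (simp add: cycle_perm_def)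
      then have y: "n \<le> y" "y < n + q"
        using xy(3) P_lt[of y k] by (auto simp: cycle_perm_def split: if_splits)
      then have "(x - n + 1) mod q = (y - n + 1) mod q" using xy(3) 2 by (simp add: cycle_perm_def)
      moreover have "x - n < q" "y - n < q" using 2 y by arith+
      ultimately have "x - n = y - n" using mod_succ_inj by blast
      then show ?thesis using 2 y by arith
    next
      case 3
      then have "pk x = x" by (simp add: cycle_perm_def)
      have "n + q \<le> y"
      proof (rule ccontr)
        assume "\<not> n + q \<le> y"
        then have "pk y < n + q" using P_lt[of y k] mod_q[of y] by (auto simp: cycle_perm_def)
        then show False using xy(3) \<open>pk x = x\<close> 3 by simp
      qed
      then show ?thesis using xy(3) 3 by (simp add: cycle_perm_def)
    qed
  qed
qed simp

lemma old_perm_permutes: "old_perm n (P i) permutes {..<N}"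
proof (rule endo_permutes)
  show "old_perm n (P i) ` {..<N} \<subseteq> {..<N}"
  proof
    fix y assume "y \<in> old_perm n (P i) ` {..<N}"
    then obtain x where "x < N" "y = old_perm n (P i) x" by blast
    then show "y \<in> {..<N}" using P_lt[of x i] N_ge by (auto simp: old_perm_def)
  qed
  show "inj_on (old_perm n (P i)) {..<N}"
  proof (rule inj_onI)
    fix x y assume "old_perm n (P i) x = old_perm n (P i) y"
    then show "x = y"
      using permutes_inj[OF P_permutes[of i]] P_lt[of x i] P_lt[of y i]
      by (auto simp: old_perm_def inj_eq split: if_splits)
  qed
qed (auto simp: old_perm_def N_def)

lemma \<pi>_permutes: "\<pi> i permutes {..<N}"
  using pj_permutes pk_permutes old_perm_permutes by (simp add: \<pi>_def)

lemma \<pi>_old: "i \<noteq> j \<Longrightarrow> x < n \<Longrightarrow> \<pi> i x = P i x"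
  by (auto simp: \<pi>_def cycle_perm_def old_perm_def)

sublocale perm_rep N r \<pi>
  using jr \<pi>_permutes by unfold_locales auto

end

context cover_construction
begin

text \<open>If the old vertices are connected to a inside Y, then every vertex is reachable
  from x_0 = n: x_0 \<rightarrow> x_1 \<rightarrow> ... along label k, x_t \<rightarrow> y_t along label j, and
  y_0 \<leftarrow> a along label j.\<close>
lemma reach_from_x0:
  assumes old: "\<And>x. x < n \<Longrightarrow> (a, x) \<in> (adj Y)\<^sup>*" and v: "v < N"
  shows "(n, v) \<in> (adj Y)\<^sup>*"
proof -
  have step_j: "(u, pj u) \<in> adj Y" "(pj u, u) \<in> adj Y" if "u < N" for u
    using adj_step[OF that jr] \<pi>_j by auto
  have step_k: "(u, pk u) \<in> adj Y" if "u < N" for u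
    using adj_step[OF that kr] \<pi>_k by auto
  have x: "(n, n + t) \<in> (adj Y)\<^sup>*" if "t < q" for t
    using that
  proof (induct t)
    case (Suc t)
    have "pk (n + t) = n + Suc t" using Suc(2) by (simp add: cycle_perm_def)
    then have "(n + t, n + Suc t) \<in> adj Y" using step_k[of "n + t"] Suc(2) N_ge by simp
    with Suc show ?case by (meson Suc_lessD rtrancl.rtrancl_into_rtrancl)
  qed simp
  have y: "(n, n + q + t) \<in> (adj Y)\<^sup>*" if "t < q" for t
  proof (cases "t = 0")
    case True
    have "pj (n + q) = n + 1" using pj_y[of "n + q"] q2 by simp
    then have "(n + 1, n + q) \<in> adj Y" using step_j(2)[of "n + q"] N_ge q2 by simp
    then show ?thesis using x[of 1] q2 True by simp
  next
    case False
    have "pj (n + t) = n + q + t" using pj_x[of "n + t"] that False by simp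
    then have "(n + t, n + q + t) \<in> adj Y" using step_j(1)[of "n + t"] N_ge that by simp
    with x[OF that] show ?thesis by (rule rtrancl_into_rtrancl)
  qed
  have a: "(n, a) \<in> (adj Y)\<^sup>*"
    using y[of 0] step_j(2)[of a] pj_a an N_ge q2 by (simp add: rtrancl_into_rtrancl)
  have "v < n + 2*q + (if extra then 1 else 0)" using v by (simp add: N_def)
  then have "v < n \<or> (n \<le> v \<and> v < n + q) \<or> (n + q \<le> v \<and> v < n + 2*q) \<or> (v = n + 2*q \<and> extra)"
    by (cases extra) auto
  then consider "v < n" | "n \<le> v" "v < n + q" | "n + q \<le> v" "v < n + 2*q" | "v = n + 2*q" "extra"
    by blast
  then show ?thesis
  proof cases
    case 1 then show ?thesis using a old rtrancl_trans by metis
  next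
    case 2 then show ?thesis using x[of "v - n"] by simp
  next
    case 3 then show ?thesis using y[of "v - n - q"] by simp
  next
    case 4
    have "n + 2*q - 1 = n + q + (q - 1)" using q2 by simp
    then have "(n + q + (q - 1), n + 2*q) \<in> adj Y"
      using step_j(1)[of "n + 2*q - 1"] pj_y_last 4 N_ge q2 by simp
    then show ?thesis using y[of "q - 1"] 4 q2 by (simp add: rtrancl_into_rtrancl)
  qed
qed

text \<open>rot = pk^(q-1) is the inverse of the q-cycle on x_0, ..., x_(q-1) (P_k^(q-1) = id
  takes care of the old vertices); its conjugate by pj is a q-cycle on x_0, y_1, ..., y_(q-1).
  The two cycles share only x_0, so their commutator is a 3-cycle.\<close>
definition rot :: "nat \<Rightarrow> nat" where "rot = pk ^^ (q - 1)"

lemma pk_power: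
  "(pk ^^ t) x = (if x < n then (P k ^^ t) x else if x < n + q then n + ((x - n + t) mod q) else x)"
proof (induct t)
  case (Suc t)
  have old: "x < n \<Longrightarrow> (P k ^^ t) x < n" by (induct t) (simp_all add: P_lt)
  consider "x < n" | "n \<le> x" "x < n + q" | "n + q \<le> x" by linarith
  then show ?case
  proof cases
    case 1 then show ?thesis using Suc old by (simp add: cycle_perm_def)
  next
    case 2
    have "(x - n + t) mod q < q" using q2 by simp
    then have "pk (n + ((x - n + t) mod q)) = n + (((x - n + t) mod q + 1) mod q)"
      by (simp add: cycle_perm_def)
    also have "\<dots> = n + ((x - n + Suc t) mod q)" by (simp add: mod_Suc_eq)
    finally show ?thesis using Suc 2 by simp
  next
    case 3 then show ?thesis using Suc by (simp add: cycle_perm_def)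
  qed
qed simp

lemma rot_val: "rot x = (if n \<le> x \<and> x < n + q then n + ((x - n + (q - 1)) mod q) else x)"
  using Pk_order unfolding rot_def pk_power by auto

lemma rot_moves: "n \<le> x \<Longrightarrow> x < n + q \<Longrightarrow> rot x \<noteq> x"
proof -
  assume x: "n \<le> x" "x < n + q"
  have "(x - n + (q - 1)) mod q \<noteq> x - n"
  proof (cases "x - n = 0")
    case True then show ?thesis using q2 by simp
  next
    case False
    then have "x - n + (q - 1) = (x - n - 1) + 1 * q" using q2 by simp
    then have "(x - n + (q - 1)) mod q = x - n - 1"
      using x by (metis mod_mult_self1 mod_less less_imp_diff_less add_less_cancel_left le_add_diff_inverse)
    then show ?thesis using False by simp
  qed
  then show ?thesis using x rot_val by auto
qed

lemma three_cycle_in_monodromy: "monodromy.inH (cyc3 n (n + q - 1) (n + 2*q - 1))"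
proof -
  have rot_perm: "rot permutes {..<N}" unfolding rot_def by (rule permutes_funpow[OF pk_permutes])
  have rot_in: "monodromy.inH rot"
    unfolding rot_def using monodromy.inH_funpow \<sigma>_in_monodromy[OF kr] \<pi>_k by simp
  have pj_in: "monodromy.inH pj" using \<sigma>_in_monodromy[OF jr] \<pi>_j by simp
  define h where "h = pj \<circ> rot \<circ> pinv pj"
  have h_perm: "h permutes {..<N}"
    unfolding h_def using rot_perm pj_permutes by (simp add: permutes_compose permutes_inv)
  have h_in: "monodromy.inH h"
    unfolding h_def by (rule monodromy.inH_conj[OF pj_in pj_permutes rot_in])
  have pj_inv: "pinv pj y = x" if "pj x = y" for x y
    using permutes_inv_eq[OF pj_permutes] that by simp
  have rot_x0: "rot n = n + q - 1" using rot_val[of n] q2 by simp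
  have h_x0: "h n = n + 2*q - 1"
    using pj_inv[OF pj_x0] pj_x[of "n + q - 1"] rot_x0 q2 by (simp add: h_def)
  have disjoint: "rot y = y \<or> h y = y" if "y \<noteq> n" for y
  proof (cases "rot y = y")
    case False
    then have y: "n < y" "y < n + q" using rot_val[of y] that by (auto split: if_splits)
    have pj_y': "pj (y + q - 1) = y" using pj_y[of "y + q - 1"] y q2 by simp
    have "\<not> y + q - 1 < n + q" using y q2 by arith
    then have "rot (y + q - 1) = y + q - 1" using rot_val[of "y + q - 1"] by simp
    then show ?thesis using pj_inv[OF pj_y'] pj_y' by (simp add: h_def)
  qed simp
  have "rot \<circ> h \<circ> pinv rot \<circ> pinv h = cyc3 n (n + q - 1) (n + 2*q - 1)"
    using commutator_cyc3[OF permutes_bij[OF rot_perm] permutes_bij[OF h_perm], of n]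
      rot_moves[of n] rot_x0 h_x0 q2 disjoint by simp
  moreover have "monodromy.inH (rot \<circ> h \<circ> pinv rot \<circ> pinv h)"
    using rot_in h_in rot_perm h_perm
    by (intro monodromy.inH_comp monodromy.inH_inv) auto
  ultimately show ?thesis by simp
qed

lemma generators_keep_two:
  assumes "i < r"
  shows "\<exists>u v. u \<in> {n, n + q - 1, n + 2*q - 1} \<and> v \<in> {n, n + q - 1, n + 2*q - 1} \<and>
    \<pi> i u \<in> {n, n + q - 1, n + 2*q - 1} \<and> \<pi> i v \<in> {n, n + q - 1, n + 2*q - 1} \<and> u \<noteq> v"
proof -
  consider "i = j" | "i = k" | "i \<noteq> j" "i \<noteq> k" by blast
  then show ?thesis
  proof cases
    case 1
    have "pj (n + q - 1) = n + 2*q - 1" using pj_x[of "n + q - 1"] q2 by simp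
    then show ?thesis using 1 \<pi>_j pj_x0 q2
      by (intro exI[of _ n] exI[of _ "n + q - 1"]) auto
  next
    case 2
    have "\<not> n + q - 1 < n" "n + q - 1 < n + q" "\<not> n + 2*q - 1 < n + q" using q2 by arith+
    then have "pk (n + q - 1) = n" "pk (n + 2*q - 1) = n + 2*q - 1"
      using q2 by (simp_all add: cycle_perm_def)
    then show ?thesis using 2 \<pi>_k q2
      by (intro exI[of _ "n + 2*q - 1"] exI[of _ "n + q - 1"]) auto
  next
    case 3
    then show ?thesis using q2
      by (intro exI[of _ n] exI[of _ "n + q - 1"]) (auto simp: \<pi>_def old_perm_def)
  qed
qed

lemma connected_and_full_monodromy:
  assumes old: "\<And>x. x < n \<Longrightarrow> (a, x) \<in> (adj Y)\<^sup>*" and odd: "\<not> evenperm pj"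
  shows "connected_lgraph Y" "monodromy_image r Y = carrier (BijGroup (verts Y))"
proof -
  show conn: "connected_lgraph Y"
    using reach_from_x0[OF old] by (intro connected_from_root) (simp add: perm_graph_def)
  have S0: "distinct [n, n + q - 1, n + 2*q - 1]" "{n, n + q - 1, n + 2*q - 1} \<subseteq> {..<N}"
    using q2 N_ge by auto
  show "monodromy_image r Y = carrier (BijGroup (verts Y))"
    by (rule full_monodromy[OF conn three_cycle_in_monodromy S0 generators_keep_two jr])
       (use odd \<pi>_j in simp_all)
qed

end

text \<open>The locale assumptions do not involve the flag; one of its two values makes label j odd.\<close>
lemma odd_path_perm:
  assumes "cover_construction n r j k a b q P Q"
  shows "\<exists>extra. \<not> evenperm (path_perm n q a b Q extra)"
proof -
  interpret C: cover_construction n r j k a b q False P Q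
    by (rule assms)
  have "permutation (path_perm n q a b Q False)"
    using C.pj_permutes permutation_permutes by blast
  moreover have "path_perm n q a b Q True = transpose b (n + 2*q) \<circ> path_perm n q a b Q False"
    using path_perm_flag C.q2 C.bn C.Q_props by auto
  moreover have "b \<noteq> n + 2*q" using C.bn by simp
  ultimately have "evenperm (path_perm n q a b Q True) \<longleftrightarrow> \<not> evenperm (path_perm n q a b Q False)"
    by (simp add: evenperm_comp permutation_swap_id evenperm_swap)
  then show ?thesis by blast
qed

section \<open>Partial permutations of an immersed graph\<close>

lemma partial_bij_extends:
  assumes "finite A" "finite B" "card A = card B" "D \<subseteq> A" "inj_on s D" "s ` D \<subseteq> B"
  shows "\<exists>f. bij_betw f A B \<and> (\<forall>x\<in>D. f x = s x)"
proof -
  have "finite D" using assms(1,4) finite_subset by blast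
  then have "card (A - D) = card (B - s ` D)"
    using assms card_image[OF assms(5)] by (simp add: card_Diff_subset)
  then obtain h where h: "bij_betw h (A - D) (B - s ` D)"
    using finite_same_card_bij[of "A - D" "B - s ` D"] assms(1,2) by auto
  let ?f = "\<lambda>x. if x \<in> D then s x else h x"
  have "bij_betw ?f D (s ` D)" using assms(5) by (simp add: bij_betw_def inj_on_def)
  moreover have "bij_betw ?f (A - D) (B - s ` D)"
    using h by (rule bij_betw_cong[THEN iffD1, rotated]) auto
  ultimately have "bij_betw ?f (D \<union> (A - D)) (s ` D \<union> (B - s ` D))"
    by (rule bij_betw_combine) auto
  moreover have "D \<union> (A - D) = A" "s ` D \<union> (B - s ` D) = B" using assms(4,6) by auto
  ultimately show ?thesis by (intro exI[of _ ?f]) auto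
qed

lemma partial_perm_extends:
  fixes n :: nat
  assumes "D \<subseteq> {..<n}" "inj_on s D" "s ` D \<subseteq> {..<n}"
  shows "\<exists>p. p permutes {..<n} \<and> (\<forall>x\<in>D. p x = s x)"
proof -
  obtain f where f: "bij_betw f {..<n} {..<n}" "\<forall>x\<in>D. f x = s x"
    using partial_bij_extends[of "{..<n}" "{..<n}" D s] assms by auto
  let ?p = "\<lambda>x. if x < n then f x else x"
  have "bij_betw ?p {..<n} {..<n}" using f(1) by (rule bij_betw_cong[THEN iffD1, rotated]) auto
  then have "?p permutes {..<n}" by (rule bij_imp_permutes) auto
  then show ?thesis using f(2) assms(1) by (intro exI[of _ ?p]) auto
qed

lemma card_less_missing:
  assumes "X \<subseteq> {..<n}" "card X < n" shows "\<exists>x<n. x \<notin> X"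
proof (rule ccontr)
  assume "\<not> (\<exists>x<n. x \<notin> X)"
  then have "X = {..<n}" using assms(1) by auto
  then show False using assms(2) by simp
qed

text \<open>An immersion Z whose vertices are numbered 0, ..., n-1 by idx.  For each label i,
  the arcs labelled i form a partial injection pmap i on the numbers, with domain pdom i.\<close>
locale numbered_immersion =
  fixes r :: nat and Z :: "('v, 'e) lgraph" and n :: nat and idx :: "'v \<Rightarrow> nat"
  assumes wf: "wf_lgraph r Z" and imm: "immersion r Z"
    and idx_bij: "bij_betw idx (verts Z) {..<n}"
begin

definition pdom :: "nat \<Rightarrow> nat set" where
  "pdom i = (\<lambda>e. idx (tail Z e)) ` {e \<in> arcs Z. lab Z e = i}"

definition pmap :: "nat \<Rightarrow> nat \<Rightarrow> nat" where
  "pmap i x = idx (head Z (THE e. e \<in> arcs Z \<and> lab Z e = i \<and> idx (tail Z e) = x))"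

lemma arc_ends: "e \<in> arcs Z \<Longrightarrow> tail Z e \<in> verts Z \<and> head Z e \<in> verts Z \<and> lab Z e < r"
  using wf by (simp add: wf_lgraph_def)

lemma idx_lt: "v \<in> verts Z \<Longrightarrow> idx v < n"
  using idx_bij by (auto simp: bij_betw_def)

lemma idx_eq: "u \<in> verts Z \<Longrightarrow> v \<in> verts Z \<Longrightarrow> idx u = idx v \<longleftrightarrow> u = v"
  using idx_bij by (auto simp: bij_betw_def inj_on_def)

lemma out_unique:
  "e \<in> arcs Z \<Longrightarrow> e' \<in> arcs Z \<Longrightarrow> tail Z e = tail Z e' \<Longrightarrow> lab Z e = lab Z e' \<Longrightarrow> e = e'"
  using imm arc_ends unfolding immersion_def by metis

lemma in_unique:
  "e \<in> arcs Z \<Longrightarrow> e' \<in> arcs Z \<Longrightarrow> head Z e = head Z e' \<Longrightarrow> lab Z e = lab Z e' \<Longrightarrow> e = e'"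
  using imm arc_ends unfolding immersion_def by metis

lemma pmap_arc: "e \<in> arcs Z \<Longrightarrow> pmap (lab Z e) (idx (tail Z e)) = idx (head Z e)"
proof -
  assume e: "e \<in> arcs Z"
  have "(THE e'. e' \<in> arcs Z \<and> lab Z e' = lab Z e \<and> idx (tail Z e') = idx (tail Z e)) = e"
  proof (rule the_equality)
    fix e' assume e': "e' \<in> arcs Z \<and> lab Z e' = lab Z e \<and> idx (tail Z e') = idx (tail Z e)"
    then have "tail Z e' = tail Z e" using idx_eq[of "tail Z e'" "tail Z e"] arc_ends e by blast
    then show "e' = e" using out_unique[of e' e] e e' by simp
  qed (use e in simp)
  then show ?thesis by (simp add: pmap_def)
qed

lemma pdom_sub: "pdom i \<subseteq> {..<n}"
  using idx_lt arc_ends by (auto simp: pdom_def)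

lemma pmap_range: "pmap i ` pdom i \<subseteq> {..<n}"
  using idx_lt arc_ends pmap_arc by (auto simp: pdom_def)

lemma pmap_inj: "inj_on (pmap i) (pdom i)"
proof (rule inj_onI)
  fix x y assume "x \<in> pdom i" "y \<in> pdom i" "pmap i x = pmap i y"
  then obtain e e' where e: "e \<in> arcs Z" "lab Z e = i" "x = idx (tail Z e)"
    "e' \<in> arcs Z" "lab Z e' = i" "y = idx (tail Z e')" "pmap i x = pmap i y"
    by (auto simp: pdom_def)
  then have "idx (head Z e) = idx (head Z e')" using pmap_arc by metis
  then have "head Z e = head Z e'" using idx_eq[of "head Z e" "head Z e'"] arc_ends e(1,4) by blast
  then have "e = e'" using in_unique[OF e(1,4)] e(2,5) by simp
  then show "x = y" using e by simp
qed

text \<open>If Z is not a covering, some label j is missing at some vertex: there are numbers a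
  outside the domain and b outside the range of pmap j (the domain and range have the same
  size, so a missing outgoing arc forces a missing incoming arc and vice versa).\<close>
lemma missing_slot:
  assumes "\<not> covering r Z"
  obtains j a b where "j < r" "a < n" "b < n" "a \<notin> pdom j" "b \<notin> pmap j ` pdom j"
proof -
  obtain v i where vi: "v \<in> verts Z" "i < r"
    "\<not> ((\<exists>!e. e \<in> arcs Z \<and> tail Z e = v \<and> lab Z e = i) \<and>
        (\<exists>!e. e \<in> arcs Z \<and> head Z e = v \<and> lab Z e = i))"
    using assms unfolding covering_def by blast
  have "\<not> (\<exists>e. e \<in> arcs Z \<and> tail Z e = v \<and> lab Z e = i) \<or>
        \<not> (\<exists>e. e \<in> arcs Z \<and> head Z e = v \<and> lab Z e = i)"
  proof (rule ccontr)
    assume "\<not> ?thesis"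
    then obtain e e' where e: "e \<in> arcs Z" "tail Z e = v" "lab Z e = i"
      and e': "e' \<in> arcs Z" "head Z e' = v" "lab Z e' = i" by blast
    have "\<exists>!e. e \<in> arcs Z \<and> tail Z e = v \<and> lab Z e = i"
      using e out_unique by (intro ex1I[of _ e]) auto
    moreover have "\<exists>!e. e \<in> arcs Z \<and> head Z e = v \<and> lab Z e = i"
      using e' in_unique by (intro ex1I[of _ e']) auto
    ultimately show False using vi(3) by blast
  qed
  moreover have card_eq: "card (pmap i ` pdom i) = card (pdom i)" using card_image[OF pmap_inj] .
  moreover have smaller: "card X < n" if "X \<subseteq> {..<n} - {idx v}" for X
    using card_mono[OF _ that] idx_lt[OF vi(1)] by (simp add: card_Diff_singleton)
  ultimately show ?thesis
  proof (elim disjE)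
    assume no_out: "\<not> (\<exists>e. e \<in> arcs Z \<and> tail Z e = v \<and> lab Z e = i)"
    have a: "idx v \<notin> pdom i"
    proof
      assume "idx v \<in> pdom i"
      then obtain e where "e \<in> arcs Z" "lab Z e = i" "idx v = idx (tail Z e)"
        by (auto simp: pdom_def)
      then show False using no_out vi(1) idx_eq[of v "tail Z e"] arc_ends by blast
    qed
    then have "pdom i \<subseteq> {..<n} - {idx v}" using pdom_sub[of i] by blast
    then have "card (pmap i ` pdom i) < n" using card_eq smaller by simp
    then obtain b where b: "b < n" "b \<notin> pmap i ` pdom i"
      using card_less_missing[OF pmap_range[of i]] by blast
    show ?thesis using that[OF vi(2) idx_lt[OF vi(1)] b(1) a b(2)] .
  next
    assume no_in: "\<not> (\<exists>e. e \<in> arcs Z \<and> head Z e = v \<and> lab Z e = i)"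
    have v_b: "idx v \<notin> pmap i ` pdom i"
    proof
      assume "idx v \<in> pmap i ` pdom i"
      then obtain e where "e \<in> arcs Z" "lab Z e = i" "idx v = pmap i (idx (tail Z e))"
        by (auto simp: pdom_def)
      then have "e \<in> arcs Z" "lab Z e = i" "idx v = idx (head Z e)" using pmap_arc by auto
      then show False using no_in vi(1) idx_eq[of v "head Z e"] arc_ends by blast
    qed
    then have "pmap i ` pdom i \<subseteq> {..<n} - {idx v}" using pmap_range[of i] by blast
    then have "card (pdom i) < n" using smaller card_eq by metis
    then obtain a where a: "a < n" "a \<notin> pdom i" using card_less_missing[OF pdom_sub[of i]] by blast
    show ?thesis using that[OF vi(2) a(1) idx_lt[OF vi(1)] a(2) v_b] .
  qed
qed

lemma construction_data:
  assumes "2 \<le> r" "\<not> covering r Z"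
  obtains j k a b q P Q extra where "cover_construction n r j k a b q P Q" "a \<notin> pdom j"
    "\<And>i x. i \<noteq> j \<Longrightarrow> x \<in> pdom i \<Longrightarrow> P i x = pmap i x" "\<And>x. x \<in> pdom j \<Longrightarrow> Q x = pmap j x"
    "\<not> evenperm (path_perm n q a b Q extra)"
proof -
  obtain j a b where jab: "j < r" "a < n" "b < n" "a \<notin> pdom j" "b \<notin> pmap j ` pdom j"
    using missing_slot[OF assms(2)] .
  obtain P where P: "\<And>i. P i permutes {..<n}" "\<And>i x. x \<in> pdom i \<Longrightarrow> P i x = pmap i x"
    using partial_perm_extends[OF pdom_sub pmap_inj pmap_range] by metis
  have "card ({..<n} - {a}) = card ({..<n} - {b})" using jab by simp
  moreover have "pdom j \<subseteq> {..<n} - {a}" "pmap j ` pdom j \<subseteq> {..<n} - {b}"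
    using jab pdom_sub pmap_range by blast+
  ultimately obtain Q where Q: "bij_betw Q ({..<n} - {a}) ({..<n} - {b})" "\<forall>x\<in>pdom j. Q x = pmap j x"
    using partial_bij_extends[OF _ _ _ _ pmap_inj] by blast
  define k where "k = (if j = 0 then 1 else 0 :: nat)"
  have k: "k < r" "j \<noteq> k" using assms(1) by (auto simp: k_def)
  obtain m where m: "P k ^^ m = id" "0 < m"
    using permutation_is_nilpotent P(1)[of k] permutation_permutes by blast
  have data: "cover_construction n r j k a b (m + 1) P Q"
    using jab k m P(1) Q(1) by unfold_locales auto
  obtain extra where odd: "\<not> evenperm (path_perm n (m + 1) a b Q extra)"
    using odd_path_perm[OF data] by blast
  have P_ext: "\<And>i x. i \<noteq> j \<Longrightarrow> x \<in> pdom i \<Longrightarrow> P i x = pmap i x" using P(2) by blast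
  have Q_ext: "\<And>x. x \<in> pdom j \<Longrightarrow> Q x = pmap j x" using Q(2) by blast
  show ?thesis by (rule that[OF data jab(4) P_ext Q_ext odd])
qed

lemma embedding_into_construction:
  assumes C: "cover_construction n r j k a b q P Q" and a: "a \<notin> pdom j"
    and P: "\<And>i x. i \<noteq> j \<Longrightarrow> x \<in> pdom i \<Longrightarrow> P i x = pmap i x"
    and Q: "\<And>x. x \<in> pdom j \<Longrightarrow> Q x = pmap j x"
  shows "subgraph_embedding Z
    (perm_graph (cover_construction.N n q extra) r (cover_construction.\<pi> n j k a b q extra P Q))
    idx (\<lambda>e. idx (tail Z e) * r + lab Z e)"
proof -
  interpret C: cover_construction n r j k a b q extra P Q by (rule C)
  show ?thesis
  proof (rule C.embedding_into_perm_graph[OF wf imm])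
    show "inj_on idx (verts Z)" using idx_bij by (simp add: bij_betw_def)
    have "idx v < C.N" if "v \<in> verts Z" for v using idx_lt[OF that] C.N_ge by linarith
    then show "idx ` verts Z \<subseteq> {..<C.N}" by auto
    fix e assume e: "e \<in> arcs Z"
    have dom: "idx (tail Z e) \<in> pdom (lab Z e)" "idx (tail Z e) < n"
      using e idx_lt arc_ends by (auto simp: pdom_def)
    show "C.\<pi> (lab Z e) (idx (tail Z e)) = idx (head Z e)"
    proof (cases "lab Z e = j")
      case True
      then have "idx (tail Z e) \<noteq> a" using dom a by auto
      then show ?thesis using True dom C.pj_old C.\<pi>_j Q pmap_arc[OF e] by simp
    next
      case False
      then show ?thesis using dom C.\<pi>_old P pmap_arc[OF e] by simp
    qed
  qed
qed

theorem covering_extension: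
  assumes "2 \<le> r" "connected_lgraph Z" "\<not> covering r Z"
  shows "\<exists>(Y :: (nat, nat) lgraph) fv fe.
           wf_lgraph r Y \<and> finite_lgraph Y \<and> connected_lgraph Y \<and> covering r Y \<and>
           subgraph_embedding Z Y fv fe \<and> monodromy_image r Y = carrier (BijGroup (verts Y))"
proof -
  obtain j k a b q P Q extra where data: "cover_construction n r j k a b q P Q" "a \<notin> pdom j"
    "\<And>i x. i \<noteq> j \<Longrightarrow> x \<in> pdom i \<Longrightarrow> P i x = pmap i x" "\<And>x. x \<in> pdom j \<Longrightarrow> Q x = pmap j x"
    and odd: "\<not> evenperm (path_perm n q a b Q extra)"
    using construction_data[OF assms(1,3)] by metis
  interpret C: cover_construction n r j k a b q extra P Q by (rule data(1))
  note emb = embedding_into_construction[OF data, of extra]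
  have old: "(a, x) \<in> (adj C.Y)\<^sup>*" if "x < n" for x
  proof -
    have "a \<in> idx ` verts Z" "x \<in> idx ` verts Z"
      using idx_bij C.an that unfolding bij_betw_def by auto
    then obtain u v where uv: "u \<in> verts Z" "v \<in> verts Z" "idx u = a" "idx v = x" by blast
    then have "(u, v) \<in> (adj Z)\<^sup>*" using assms(2) unfolding connected_lgraph_def by blast
    then show ?thesis using embedding_rtrancl[OF emb] uv(3,4) by blast
  qed
  show ?thesis
    by (intro exI[of _ C.Y] exI[of _ idx] exI[of _ "\<lambda>e. idx (tail Z e) * r + lab Z e"] conjI
        C.perm_graph_wf C.perm_graph_finite C.perm_graph_covering emb
        C.connected_and_full_monodromy[OF old odd])
qed

end

theorem lemma3p4:
  fixes r :: nat and Z :: "('v, 'e) lgraph"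
  assumes "r \<ge> 2"
    and "wf_lgraph r Z"
    and "finite_lgraph Z"
    and "verts Z \<noteq> {}"
    and "connected_lgraph Z"
    and "immersion r Z"
    and "\<not> covering r Z"
  shows "\<exists>(Y :: (nat, nat) lgraph) fv fe.
           wf_lgraph r Y \<and> finite_lgraph Y \<and> connected_lgraph Y \<and> covering r Y \<and>
           subgraph_embedding Z Y fv fe \<and>
           monodromy_image r Y = carrier (BijGroup (verts Y))"
proof -
  have "finite (verts Z)" using assms(3) by (simp add: finite_lgraph_def)
  then obtain idx where "bij_betw idx (verts Z) {0..<card (verts Z)}"
    using ex_bij_betw_finite_nat by blast
  then have "bij_betw idx (verts Z) {..<card (verts Z)}" by (simp add: atLeast0LessThan)
  then interpret numbered_immersion r Z "card (verts Z)" idx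
    using assms(2,6) by (simp add: numbered_immersion_def)
  show ?thesis using covering_extension[OF assms(1,5,7)] .
qed

end
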